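(* Let $\mathcal{G}=(\mathcal{V},\mathcal{R},\mathcal{E})$ be a knowledge graph, let $s\in\mathcal{V}$ be a source node, $q\in\mathcal{R}$ a query relation, and $\delta\ge 0$ an integer offset. Let $\mathbf{x}_q^{(t)}(s,o)$, $t\ge 0$, $o\in\mathcal{V}$, be computed by the truncated generalized Bellman–Ford recursion described in the context, and let $\mathbf{x}_q^F(s,o)=\mathbf{x}_q^{(\mathrm{dist}(s,o)+\delta)}(s,o)$ be the final representation. Then for every $o\in\mathcal{V}$ (with $\mathrm{dist}(s,o)<\infty$), the final representation $\mathbf{x}_q^F(s,o)$ aggregates exactly the path representations of all paths from $s$ to $o$ whose length lies between $\mathrm{dist}(s,o)$ and $\mathrm{dist}(s,o)+\delta$, and no others; that is, $$\mathbf{x}_q^F(s,o)=\bigoplus_{t=\mathrm{dist}(s,o)}^{\mathrm{dist}(s,o)+\delta}\ \bigoplus_{p\in P_{s,o}^t}\ \bigotimes_{i=1}^{|p|} w(e_i).$$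
   Context: A knowledge graph is $\mathcal{G}=(\mathcal{V},\mathcal{R},\mathcal{E})$ with entity set $\mathcal{V}$, relation set $\mathcal{R}$, and edge set $\mathcal{E}$ of triples $(u,r,v)$ with $u,v\in\mathcal{V}$, $r\in\mathcal{R}$, regarded as a directed edge from $u$ to $v$. For $o\in\mathcal{V}$, $\mathcal{E}(o)$ denotes the set of edges of the form $(v,r,o)$ (edges with $o$ as object). All edges have weight 1, and $\mathrm{dist}(s,o)$ is the shortest path distance (number of edges) from $s$ to $o$. For an integer $t\ge 0$, $P^t_{s,o}$ denotes the set of paths (in the loose sense of walks, repeated nodes and edges allowed) of length $t$ from $s$ to $o$; for a path $p=(e_1,\dots,e_{|p|})$, $w(e_i)=\mathbf{w}_q(e_i)$ is the representation of edge $e_i$ conditioned on $q$. The operations $\oplus$ (summation/aggregation) and $\otimes$ (multiplication) are those of the semiring used in the generalized Bellman–Ford algorithm, and $\mathbf{1}_q(s=o)$ denotes the multiplicative identity of the semiring if $s=o$ and the additive identity otherwise. Truncated Bellman–Ford recursion: set $\mathbf{x}_q^{(0)}(s,o)=\mathbf{1}_q(s=o)$. For $t\ge 1$ define the constrained edge set $$\mathcal{C}(s,o,t)=\begin{cases}\emptyset, & \text{if } t<\mathrm{dist}(s,o)\text{ or } t>\mathrm{dist}(s,o)+\delta,\\ \{(v,r,o)\in\mathcal{E}(o)\,:\,\mathrm{dist}(s,v)<\mathrm{dist}(s,o)+\delta\}, & \text{otherwise.}\end{cases}$$ For $t\ge 1$: if $\mathrm{dist}(s,o)\le t\le \mathrm{dist}(s,o)+\delta$,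 then $$\mathbf{x}_q^{(t)}(s,o)=\Big(\bigoplus_{(v,r,o)\in\mathcal{C}(s,o,t)}\mathbf{x}_q^{(t-1)}(s,v)\otimes \mathbf{w}_q(v,r,o)\Big)\oplus \mathbf{x}_q^{(0)}(s,o);$$ otherwise node $o$ is not updated at iteration $t$, i.e. $\mathbf{x}_q^{(t)}(s,o)=\mathbf{x}_q^{(t-1)}(s,o)$. The final representation of the pair is $\mathbf{x}_q^F(s,o)=\mathbf{x}_q^{(\mathrm{dist}(s,o)+\delta)}(s,o)$. *)

theory Defs
  imports Main "HOL-Library.Extended_Nat"
begin

type_synonym ('v, 'r) edge = "'v \<times> 'r \<times> 'v"

abbreviation subj :: "('v, 'r) edge \<Rightarrow> 'v" where "subj e \<equiv> fst e"
abbreviation obj :: "('v, 'r) edge \<Rightarrow> 'v" where "obj e \<equiv> snd (snd e)"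

text \<open>A walk (path in the loose sense) from s to ob: a list of edges of E,
  consecutive, starting at s and ending at ob.\<close>
fun is_walk :: "('v, 'r) edge set \<Rightarrow> 'v \<Rightarrow> 'v \<Rightarrow> ('v, 'r) edge list \<Rightarrow> bool" where
  "is_walk E s ob [] = (s = ob)"
| "is_walk E s ob (e # es) = (e \<in> E \<and> subj e = s \<and> is_walk E (obj e) ob es)"

definition paths :: "('v, 'r) edge set \<Rightarrow> 'v \<Rightarrow> 'v \<Rightarrow> nat \<Rightarrow> ('v, 'r) edge list set" where
  "paths E s ob t = {p. is_walk E s ob p \<and> length p = t}"

definition gdist :: "('v, 'r) edge set \<Rightarrow> 'v \<Rightarrow> 'v \<Rightarrow> enat" where
  "gdist E s ob = (if \<exists>p. is_walk E s ob p
                  then enat (LEAST n. \<exists>p. is_walk E s ob p \<and> length p = n)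
                  else \<infinity>)"

definition Cset :: "('v, 'r) edge set \<Rightarrow> nat \<Rightarrow> 'v \<Rightarrow> 'v \<Rightarrow> nat \<Rightarrow> ('v, 'r) edge set" where
  "Cset E \<delta> s ob t =
     (if enat t < gdist E s ob \<or> enat t > gdist E s ob + enat \<delta> then {}
      else {e \<in> E. obj e = ob \<and> gdist E s (subj e) < gdist E s ob + enat \<delta>})"

text \<open>Truncated generalized Bellman--Ford recursion over a semiring
  (\<oplus> = +, \<otimes> = *, multiplicative identity 1, additive identity 0).
  trunc_bf E w s \<delta> t ob = x_q^{(t)}(s,ob), where w = w_q.\<close>
primrec trunc_bf :: "('v, 'r) edge set \<Rightarrow> (('v, 'r) edge \<Rightarrow> 'a::semiring_1) \<Rightarrow> 'v \<Rightarrow> nat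
                      \<Rightarrow> nat \<Rightarrow> 'v \<Rightarrow> 'a" where
  "trunc_bf E w s \<delta> 0 ob = (if s = ob then 1 else 0)"
| "trunc_bf E w s \<delta> (Suc t) ob =
     (if gdist E s ob \<le> enat (Suc t) \<and> enat (Suc t) \<le> gdist E s ob + enat \<delta>
      then (\<Sum>e \<in> Cset E \<delta> s ob (Suc t). trunc_bf E w s \<delta> t (subj e) * w e)
           + (if s = ob then 1 else 0)
      else trunc_bf E w s \<delta> t ob)"

definition final_rep :: "('v, 'r) edge set \<Rightarrow> (('v, 'r) edge \<Rightarrow> 'a::semiring_1) \<Rightarrow> 'v \<Rightarrow> nat
                      \<Rightarrow> 'v \<Rightarrow> 'a" where
  "final_rep E w s \<delta> ob = trunc_bf E w s \<delta> (the_enat (gdist E s ob) + \<delta>) ob"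

end

theory Submission
  imports Defs
begin

text \<open>Every walk of length k to o ends with an edge (v, r, o) preceded by a walk of length k - 1
  to v, so the sums W(o, k) of walk weights obey the unrestricted Bellman--Ford recursion
  W(o, k + 1) = \<Sum>(v,r,o). W(v, k) w(v,r,o). The truncated recursion computes
  x_t(o) = \<Sum>{W(o, k) | k \<le> t, k \<le> dist(o) + \<delta>} by induction on t. Inside the update window
  dist(o) \<le> t \<le> dist(o) + \<delta> the edge constraint is harmless: an excluded predecessor v has
  dist(v) \<ge> dist(o) + \<delta> \<ge> t, so it carries no walks of length below t, while an admitted one has
  dist(v) + \<delta> \<ge> dist(o) - 1 + \<delta> \<ge> t - 1, so its own truncation has not yet cut anything off.
  Taking t = dist(o) + \<delta> and discarding the lengths below dist(o), which carry no walks, gives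
  the theorem.\<close>

lemma is_walk_snoc:
  "is_walk E s ob (es @ [e]) \<longleftrightarrow> is_walk E s (subj e) es \<and> e \<in> E \<and> obj e = ob"
  by (induction es arbitrary: s) auto

lemma is_walk_set_subset: "is_walk E s ob p \<Longrightarrow> set p \<subseteq> E"
  by (induction p arbitrary: s) auto

lemma finite_paths:
  assumes "finite E"
  shows "finite (paths E s ob k)"
proof (rule finite_subset)
  show "paths E s ob k \<subseteq> {p. set p \<subseteq> E \<and> length p = k}"
    unfolding paths_def by (auto dest: is_walk_set_subset)
  show "finite {p. set p \<subseteq> E \<and> length p = k}"
    using finite_lists_length_eq[OF assms] by simp
qed

lemma paths_0: "paths E s ob 0 = (if s = ob then {[]} else {})"
  unfolding paths_def by auto

lemma paths_Suc:
  "paths E s ob (Suc k) =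
     (\<lambda>(e, p). p @ [e]) ` (SIGMA e:{e \<in> E. obj e = ob}. paths E s (subj e) k)"
proof (intro equalityI subsetI)
  fix p assume "p \<in> paths E s ob (Suc k)"
  then have p: "is_walk E s ob p" "length p = Suc k" unfolding paths_def by auto
  then obtain es e where "p = es @ [e]" by (cases p rule: rev_exhaust) auto
  with p show "p \<in> (\<lambda>(e, p). p @ [e]) ` (SIGMA e:{e \<in> E. obj e = ob}. paths E s (subj e) k)"
    unfolding paths_def by (auto simp: is_walk_snoc)
qed (auto simp: paths_def is_walk_snoc)

lemma gdist_le_length: "is_walk E s ob p \<Longrightarrow> gdist E s ob \<le> enat (length p)"
  unfolding gdist_def by (auto intro: Least_le)

lemma gdist_enatE:
  assumes "gdist E s ob = enat n"
  obtains p where "is_walk E s ob p" "length p = n"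
proof -
  have "\<exists>p. is_walk E s ob p"
    using assms unfolding gdist_def by (auto split: if_splits)
  then have "\<exists>p. is_walk E s ob p \<and> length p = (LEAST n. \<exists>p. is_walk E s ob p \<and> length p = n)"
    by (auto intro: LeastI)
  with assms that show thesis unfolding gdist_def by (auto split: if_splits)
qed

lemma paths_below_gdist: "enat k < gdist E s ob \<Longrightarrow> paths E s ob k = {}"
  unfolding paths_def using gdist_le_length by fastforce

lemma gdist_obj_le_gdist_subj_plus_1:
  assumes "e \<in> E"
  shows "gdist E s (obj e) \<le> gdist E s (subj e) + 1"
proof (cases "gdist E s (subj e)")
  case (enat n)
  then obtain p where "is_walk E s (subj e) p" "length p = n" by (rule gdist_enatE)
  with assms have "gdist E s (obj e) \<le> enat (length (p @ [e]))"
    by (intro gdist_le_length) (simp add: is_walk_snoc)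
  with \<open>length p = n\<close> enat show ?thesis by (simp add: one_enat_def)
qed simp

lemma window_bound_subj:
  assumes "e \<in> E" and "enat (Suc t) \<le> gdist E s (obj e) + enat \<delta>"
  shows "enat t \<le> gdist E s (subj e) + enat \<delta>"
proof -
  have "enat (Suc t) \<le> gdist E s (subj e) + 1 + enat \<delta>"
    using assms gdist_obj_le_gdist_subj_plus_1[OF assms(1), of s]
    by (meson add_right_mono order.trans)
  then show ?thesis by (cases "gdist E s (subj e)") (auto simp: one_enat_def)
qed

lemma Cset_window:
  assumes "gdist E s ob \<le> enat t" and "enat t \<le> gdist E s ob + enat \<delta>"
  shows "Cset E \<delta> s ob t = {e \<in> E. obj e = ob \<and> gdist E s (subj e) < gdist E s ob + enat \<delta>}"
  using assms unfolding Cset_def by auto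

definition walk_sum :: "('v, 'r) edge set \<Rightarrow> (('v, 'r) edge \<Rightarrow> 'a::semiring_1) \<Rightarrow> 'v \<Rightarrow> 'v
    \<Rightarrow> nat \<Rightarrow> 'a" where
  "walk_sum E w s ob k = (\<Sum>p \<in> paths E s ob k. prod_list (map w p))"

lemma walk_sum_0: "walk_sum E w s ob 0 = (if s = ob then 1 else 0)"
  unfolding walk_sum_def paths_0 by simp

lemma walk_sum_Suc:
  assumes "finite E"
  shows "walk_sum E w s ob (Suc k) = (\<Sum>e \<in> {e \<in> E. obj e = ob}. walk_sum E w s (subj e) k * w e)"
proof -
  let ?I = "{e \<in> E. obj e = ob}"
  have "inj_on (\<lambda>(e, p). p @ [e]) (SIGMA e:?I. paths E s (subj e) k)"
    by (auto simp: inj_on_def)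
  then have "walk_sum E w s ob (Suc k) =
      (\<Sum>(e, p) \<in> (SIGMA e:?I. paths E s (subj e) k). prod_list (map w p) * w e)"
    unfolding walk_sum_def paths_Suc by (simp add: sum.reindex split_def)
  also have "\<dots> = (\<Sum>e \<in> ?I. \<Sum>p \<in> paths E s (subj e) k. prod_list (map w p) * w e)"
    using assms finite_paths[OF assms] by (subst sum.Sigma) auto
  finally show ?thesis
    unfolding walk_sum_def by (simp add: sum_distrib_right)
qed

lemma walk_sum_below_gdist: "enat k < gdist E s ob \<Longrightarrow> walk_sum E w s ob k = 0"
  unfolding walk_sum_def by (simp add: paths_below_gdist)

lemma walk_sums_below_gdist:
  "enat t < gdist E s ob \<Longrightarrow> (\<Sum>k\<le>t. walk_sum E w s ob k) = 0"
  by (auto intro!: sum.neutral walk_sum_below_gdist elim: le_less_trans[rotated])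

lemma trunc_bf_in_window:
  assumes fin: "finite E"
    and IH: "\<And>v. trunc_bf E w s \<delta> t v =
               (\<Sum>k\<le>t. if enat k \<le> gdist E s v + enat \<delta> then walk_sum E w s v k else 0)"
    and window: "gdist E s ob \<le> enat (Suc t)" "enat (Suc t) \<le> gdist E s ob + enat \<delta>"
  shows "trunc_bf E w s \<delta> (Suc t) ob = (\<Sum>k\<le>Suc t. walk_sum E w s ob k)"
proof -
  let ?I = "{e \<in> E. obj e = ob}"
  let ?C = "Cset E \<delta> s ob (Suc t)"
  have C: "?C = {e \<in> ?I. gdist E s (subj e) < gdist E s ob + enat \<delta>}"
    using Cset_window[OF window] by auto
  have "(\<Sum>k\<le>Suc t. walk_sum E w s ob k) =
      walk_sum E w s ob 0 + (\<Sum>e \<in> ?I. (\<Sum>k\<le>t. walk_sum E w s (subj e) k) * w e)"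
    unfolding sum.atMost_Suc_shift
    by (simp add: walk_sum_Suc[OF fin] sum_distrib_right sum.swap[of _ "{..t}"])
  also have "(\<Sum>e \<in> ?I. (\<Sum>k\<le>t. walk_sum E w s (subj e) k) * w e) =
      (\<Sum>e \<in> ?C. trunc_bf E w s \<delta> t (subj e) * w e)"
  proof (rule sum.mono_neutral_cong_right)
    show "\<forall>e \<in> ?I - ?C. (\<Sum>k\<le>t. walk_sum E w s (subj e) k) * w e = 0"
    proof
      fix e assume far: "e \<in> ?I - ?C"
      have "enat (Suc t) \<le> gdist E s (subj e)"
        using far window(2) unfolding C by (auto simp: not_less elim: order.trans)
      then have "enat t < gdist E s (subj e)"
        by (meson enat_ord_simps(2) lessI less_le_trans)
      then show "(\<Sum>k\<le>t. walk_sum E w s (subj e) k) * w e = 0"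
        by (simp add: walk_sums_below_gdist)
    qed
    show "(\<Sum>k\<le>t. walk_sum E w s (subj e) k) * w e = trunc_bf E w s \<delta> t (subj e) * w e"
      if "e \<in> ?C" for e
    proof -
      have "enat t \<le> gdist E s (subj e) + enat \<delta>"
        using that window(2) C by (auto intro: window_bound_subj)
      then have "\<And>k. k \<le> t \<Longrightarrow> enat k \<le> gdist E s (subj e) + enat \<delta>"
        by (meson enat_ord_simps(1) order.trans)
      then show ?thesis
        unfolding IH by simp
    qed
  qed (use fin C in auto)
  finally show ?thesis
    using window by (simp add: walk_sum_0 add.commute)
qed

lemma trunc_bf_eq_walk_sums:
  assumes "finite E"
  shows "trunc_bf E w s \<delta> t ob =
    (\<Sum>k\<le>t. if enat k \<le> gdist E s ob + enat \<delta> then walk_sum E w s ob k else 0)"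
proof (induction t arbitrary: ob)
  case 0
  then show ?case by (simp add: walk_sum_0 zero_enat_def[symmetric])
next
  case (Suc t)
  show ?case
  proof (cases "gdist E s ob \<le> enat (Suc t) \<and> enat (Suc t) \<le> gdist E s ob + enat \<delta>")
    case True
    then have "\<And>k. k \<le> Suc t \<Longrightarrow> enat k \<le> gdist E s ob + enat \<delta>"
      by (meson enat_ord_simps(1) order.trans)
    then show ?thesis
      using trunc_bf_in_window[OF assms Suc.IH] True by simp
  next
    case False
    then have "(if enat (Suc t) \<le> gdist E s ob + enat \<delta> then walk_sum E w s ob (Suc t) else 0) = 0"
      by (auto intro: walk_sum_below_gdist)
    moreover have "trunc_bf E w s \<delta> (Suc t) ob = trunc_bf E w s \<delta> t ob"
      using False by (simp only: trunc_bf.simps if_False)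
    ultimately show ?thesis
      using Suc.IH[of ob] by simp
  qed
qed

theorem theorem1:
  fixes V :: "'v set" and R :: "'r set" and E :: "('v, 'r) edge set"
    and w :: "'r \<Rightarrow> ('v, 'r) edge \<Rightarrow> 'a::semiring_1"
    and s :: 'v and q :: 'r and \<delta> :: nat and ob :: 'v
  assumes "finite V" and "finite R" and "E \<subseteq> V \<times> R \<times> V"
    and "s \<in> V" and "q \<in> R" and "ob \<in> V"
    and "gdist E s ob \<noteq> \<infinity>"
  shows "final_rep E (w q) s \<delta> ob =
    (\<Sum>t \<in> {the_enat (gdist E s ob) .. the_enat (gdist E s ob) + \<delta>}.
       \<Sum>p \<in> paths E s ob t. prod_list (map (w q) p))"
proof -
  have "finite E"
    using assms(1-3) by (meson finite_SigmaI finite_subset)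
  obtain D where D: "gdist E s ob = enat D"
    using assms(7) by auto
  have "final_rep E (w q) s \<delta> ob = (\<Sum>k\<le>D + \<delta>. walk_sum E (w q) s ob k)"
    unfolding final_rep_def trunc_bf_eq_walk_sums[OF \<open>finite E\<close>] D by simp
  also have "\<dots> = (\<Sum>k \<in> {D..D + \<delta>}. walk_sum E (w q) s ob k)"
    using D by (intro sum.mono_neutral_right) (auto intro: walk_sum_below_gdist)
  finally show ?thesis
    unfolding walk_sum_def D by simp
qed

end
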